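(* Let $\mathcal{SB}=\langle\mathcal{L},A,\to,\text{supp}\rangle$ be a saturated SBAF, $E\subseteq A$ admissible and $a\in A$. If $E$ defends $a$, then $E$ contains no undercutting information for $a$, i.e. $\overline{n(a)}\cap Sent(E)=\emptyset$.
   Context: A language is a triple $\mathcal{L}=\langle L,\overline{\cdot},n\rangle$: $L$ is a nonempty set of sentences; $\overline{\cdot}$ assigns to each $s\in L$ a set $\overline{s}\subseteq L$ of sentences incompatible with $s$, and is symmetric; $n$ is a partial naming function assigning to an argument $a$ a sentence $n(a)\in L$ (if undefined, put $\overline{n(a)}:=\emptyset$), with $\overline{n(\langle\{t\},t\rangle)}=\emptyset$. An argument is a pair $a=\langle Prem(a),Conc(a)\rangle$ with $Prem(a)$ a nonempty finite subset of $L$ and $Conc(a)\in L$; $Sent(a):=Prem(a)\cup\{Conc(a)\}$, $Sent(E):=\bigcup_{a\in E}Sent(a)$. The minimal argument for $s$ is $\langle\{s\},s\rangle$. Argument $a$ attacks $b$ ($a\to b$) if $Conc(a)\in\overline{s}$ for some $s\in Sent(b)$ or $Conc(a)\in\overline{n(b)}$. An SBAF is $\langle\mathcal{L},A,\to,\text{supp}\rangle$ with $A$ a finite set of arguments. For $E\subseteq A$: $E$ defends $a\in A$ if for every $b\in A$ with $b\to a$ some element of $E$ attacks $b$; $E$ is conflict-free if no $a,b\in E$ with $a\to b$; admissible if conflict-free and defends all its elements. The SBAF is saturated if (i) for every $s\in Sent(A)$ for which some $t\in Sent(A)\cap\overline{s}$ exists, $A$ contains the minimal argument for $s$ or the minimal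 argument for $t$, and (ii) for every $u\in Sent(A)$ with $u\in\overline{n(a)}$ for some $a\in A$, $A$ contains the minimal argument for $u$. *)

theory Defs
  imports Main
begin

text \<open>Arguments are pairs (Prem, Conc). Contrariness is a function
  contr :: 's => 's set; the partial naming function is nm :: arg => 's option.\<close>

type_synonym 's arg = "'s set \<times> 's"

definition Prem :: "'s arg \<Rightarrow> 's set" where "Prem a = fst a"
definition Conc :: "'s arg \<Rightarrow> 's" where "Conc a = snd a"
definition Sent :: "'s arg \<Rightarrow> 's set" where "Sent a = Prem a \<union> {Conc a}"
definition SentE :: "'s arg set \<Rightarrow> 's set" where "SentE E = (\<Union>a\<in>E. Sent a)"
definition minarg :: "'s \<Rightarrow> 's arg" where "minarg s = ({s}, s)"

definition ncontr :: "('s \<Rightarrow> 's set) \<Rightarrow> ('s arg \<Rightarrow> 's option) \<Rightarrow> 's arg \<Rightarrow> 's set" where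
  "ncontr contr nm a = (case nm a of None \<Rightarrow> {} | Some s \<Rightarrow> contr s)"

definition is_arg :: "'s set \<Rightarrow> 's arg \<Rightarrow> bool" where
  "is_arg L a \<longleftrightarrow> Prem a \<noteq> {} \<and> finite (Prem a) \<and> Prem a \<subseteq> L \<and> Conc a \<in> L"

definition language :: "'s set \<Rightarrow> ('s \<Rightarrow> 's set) \<Rightarrow> ('s arg \<Rightarrow> 's option) \<Rightarrow> bool" where
  "language L contr nm \<longleftrightarrow>
     L \<noteq> {} \<and>
     (\<forall>s\<in>L. contr s \<subseteq> L) \<and>
     (\<forall>s\<in>L. \<forall>t\<in>L. t \<in> contr s \<longleftrightarrow> s \<in> contr t) \<and>
     (\<forall>a s. nm a = Some s \<longrightarrow> s \<in> L) \<and>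
     (\<forall>t. ncontr contr nm (minarg t) = {})"

definition attacks :: "('s \<Rightarrow> 's set) \<Rightarrow> ('s arg \<Rightarrow> 's option) \<Rightarrow> 's arg \<Rightarrow> 's arg \<Rightarrow> bool" where
  "attacks contr nm a b \<longleftrightarrow>
     (\<exists>s\<in>Sent b. Conc a \<in> contr s) \<or> Conc a \<in> ncontr contr nm b"

definition sbaf :: "'s set \<Rightarrow> ('s \<Rightarrow> 's set) \<Rightarrow> ('s arg \<Rightarrow> 's option) \<Rightarrow> 's arg set
                     \<Rightarrow> ('s arg \<Rightarrow> 's arg \<Rightarrow> bool) \<Rightarrow> ('s arg \<Rightarrow> 's arg \<Rightarrow> bool) \<Rightarrow> bool" where
  "sbaf L contr nm A att supp \<longleftrightarrow>
     language L contr nm \<and> finite A \<and> (\<forall>a\<in>A. is_arg L a) \<and>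
     att = attacks contr nm \<and>
     (\<forall>a b. supp a b \<longrightarrow> a \<in> A \<and> b \<in> A)"

definition defends :: "('s arg \<Rightarrow> 's arg \<Rightarrow> bool) \<Rightarrow> 's arg set \<Rightarrow> 's arg set \<Rightarrow> 's arg \<Rightarrow> bool" where
  "defends att A E a \<longleftrightarrow> (\<forall>b\<in>A. att b a \<longrightarrow> (\<exists>c\<in>E. att c b))"

definition conflict_free :: "('s arg \<Rightarrow> 's arg \<Rightarrow> bool) \<Rightarrow> 's arg set \<Rightarrow> bool" where
  "conflict_free att E \<longleftrightarrow> (\<forall>a\<in>E. \<forall>b\<in>E. \<not> att a b)"

definition admissible :: "('s arg \<Rightarrow> 's arg \<Rightarrow> bool) \<Rightarrow> 's arg set \<Rightarrow> 's arg set \<Rightarrow> bool" where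
  "admissible att A E \<longleftrightarrow> E \<subseteq> A \<and> conflict_free att E \<and> (\<forall>a\<in>E. defends att A E a)"

definition saturated :: "('s \<Rightarrow> 's set) \<Rightarrow> ('s arg \<Rightarrow> 's option) \<Rightarrow> 's arg set \<Rightarrow> bool" where
  "saturated contr nm A \<longleftrightarrow>
     (\<forall>s\<in>SentE A. \<forall>t\<in>SentE A. t \<in> contr s \<longrightarrow> minarg s \<in> A \<or> minarg t \<in> A) \<and>
     (\<forall>u\<in>SentE A. (\<exists>a\<in>A. u \<in> ncontr contr nm a) \<longrightarrow> minarg u \<in> A)"

end

theory Submission
  imports Defs
begin

(* If u is in the contrary of n(a) and occurs in an argument e of E, saturation puts the
   minimal argument for u into A; it undercuts a, so E must attack it.  A minimal argument
   has no name to undercut, so the attacker rebuts u itself and hence attacks e, contradicting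
   conflict-freeness of E. *)

lemma Conc_minarg [simp]: "Conc (minarg s) = s"
  by (simp add: Conc_def minarg_def)

lemma Sent_minarg [simp]: "Sent (minarg s) = {s}"
  by (simp add: Sent_def Prem_def Conc_def minarg_def)

lemma SentE_mono: "E \<subseteq> A \<Longrightarrow> SentE E \<subseteq> SentE A"
  unfolding SentE_def by blast

lemma attacks_if_Conc_in_ncontr: "Conc b \<in> ncontr contr nm a \<Longrightarrow> attacks contr nm b a"
  unfolding attacks_def by blast

lemma attacks_if_Conc_in_contr_Sent:
  "s \<in> Sent b \<Longrightarrow> Conc a \<in> contr s \<Longrightarrow> attacks contr nm a b"
  unfolding attacks_def by blast

lemma attacks_minarg_iff:
  assumes "language L contr nm"
  shows "attacks contr nm c (minarg u) \<longleftrightarrow> Conc c \<in> contr u"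
proof -
  have "ncontr contr nm (minarg u) = {}"
    using assms unfolding language_def by blast
  then show ?thesis
    unfolding attacks_def by simp
qed

lemma attacks_minarg_imp_attacks:
  assumes "language L contr nm" and "attacks contr nm c (minarg u)" and "u \<in> Sent e"
  shows "attacks contr nm c e"
  using assms attacks_minarg_iff attacks_if_Conc_in_contr_Sent by metis

lemma saturated_minarg_in_ncontr:
  assumes "saturated contr nm A" and "a \<in> A"
    and "u \<in> SentE A" and "u \<in> ncontr contr nm a"
  shows "minarg u \<in> A"
  using assms unfolding saturated_def by blast

theorem mainTheorem11:
  fixes L :: "'s set" and contr :: "'s \<Rightarrow> 's set" and nm :: "'s arg \<Rightarrow> 's option"
    and A E :: "'s arg set" and att supp :: "'s arg \<Rightarrow> 's arg \<Rightarrow> bool" and a :: "'s arg"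
  assumes "sbaf L contr nm A att supp"
    and "saturated contr nm A"
    and "admissible att A E"
    and "a \<in> A"
    and "defends att A E a"
  shows "ncontr contr nm a \<inter> SentE E = {}"
proof (rule ccontr)
  assume "ncontr contr nm a \<inter> SentE E \<noteq> {}"
  then obtain u where u: "u \<in> ncontr contr nm a" and uE: "u \<in> SentE E"
    by blast
  then obtain e where e: "e \<in> E" "u \<in> Sent e"
    unfolding SentE_def by blast
  have att: "att = attacks contr nm" and lang: "language L contr nm"
    using assms(1) unfolding sbaf_def by auto
  have EA: "E \<subseteq> A" and cf: "conflict_free att E"
    using assms(3) unfolding admissible_def by auto
  have "u \<in> SentE A"
    using SentE_mono[OF EA] uE by (rule subsetD)
  then have "minarg u \<in> A"
    by (rule saturated_minarg_in_ncontr[OF assms(2,4) _ u])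
  moreover have "att (minarg u) a"
    using attacks_if_Conc_in_ncontr[of "minarg u"] u unfolding att by simp
  ultimately obtain c where "c \<in> E" "att c (minarg u)"
    using assms(5) unfolding defends_def by blast
  then have "c \<in> E" "att c e"
    using attacks_minarg_imp_attacks[OF lang _ e(2)] unfolding att by auto
  then show False
    using cf e(1) unfolding conflict_free_def by blast
qed

end
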